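(* For every finite set $\Xi\subset\mathbb{F}^2$ of distinct points, the Maximal Cartesian Subset Construction procedure described in the context (for any admissible choices made in step 3) terminates after finitely many iterations, and the set $\Xi'$ it returns is a maximal cartesian subset of $\Xi$, i.e. $\Xi'$ is cartesian and there is no cartesian subset $\Xi''\subseteq\Xi$ with $\Xi'\subsetneq\Xi''$.
   Context: $\mathbb{F}$ is a field. A finite set $\mathcal{A}\subset\mathbb{N}_0^2$ is a lower set if with each $(\alpha_1,\alpha_2)$ it contains all $(\alpha_1',\alpha_2')\in\mathbb{N}_0^2$ with $\alpha_1'\le\alpha_1,\alpha_2'\le\alpha_2$. A finite set of distinct points is cartesian if it equals $\{(x_i,y_j):(i,j)\in\mathcal{A}\}$ for a lower set $\mathcal{A}$, pairwise distinct $x_i$ and pairwise distinct $y_j$. $S_x(\Xi)$: with horizontal lines through points of $\Xi$ (one per distinct ordinate) numbered $l^x_0,\dots,l^x_\nu$ so that $l^x_j$ contains $m_j+1$ points and $m_0\ge\cdots\ge m_\nu$, $S_x(\Xi)=\{(i,j):0\le j\le\nu,0\le i\le m_j\}$; $S_y(\Xi)$ is defined symmetrically with vertical lines. A maximal row subset of $\Xi$ is a non-empty set of the form $\Xi\cap\ell$ for a horizontal line $\ell$. Procedure: start with $\Xi'=\emptyset$ and the working set equal to the input $\Xi$. (1) If the working set $\Xi$ is empty, return $\Xi'$. (2) If $S_x(\Xi)=S_y(\Xi)$, replace $\Xi'$ by $\Xi'\cup\Xi$ and return $\Xi'$. (3) Otherwise choose a maximal row subset $A$ of the current $\Xi$ of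 maximal cardinality; remove from $\Xi$ all points of $A$ and all points whose abscissa differs from every abscissa of the points of $A$; replace $\Xi'$ by $\Xi'\cup A$; go to (1). The returned $\Xi'$ is compared against subsets of the original input set. *)

theory Defs
  imports Main "HOL-Library.Multiset"
begin

text \<open>Points of F^2 are pairs; fst = abscissa, snd = ordinate.\<close>

definition lower_set :: "(nat \<times> nat) set \<Rightarrow> bool" where
  "lower_set A \<longleftrightarrow> finite A \<and>
     (\<forall>a1 a2 b1 b2. (a1, a2) \<in> A \<and> b1 \<le> a1 \<and> b2 \<le> a2 \<longrightarrow> (b1, b2) \<in> A)"

definition cartesian :: "('a \<times> 'a) set \<Rightarrow> bool" where
  "cartesian \<Xi> \<longleftrightarrow> (\<exists>A (x :: nat \<Rightarrow> 'a) (y :: nat \<Rightarrow> 'a).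
      lower_set A \<and> inj_on x (fst ` A) \<and> inj_on y (snd ` A) \<and>
      \<Xi> = (\<lambda>(i, j). (x i, y j)) ` A)"

text \<open>Numbers of points on the horizontal lines (rows), in non-increasing order:
  the j-th entry is m_j + 1.\<close>
definition row_counts :: "('a \<times> 'a) set \<Rightarrow> nat list" where
  "row_counts \<Xi> = rev (sorted_list_of_multiset
      (image_mset (\<lambda>c. card {p \<in> \<Xi>. snd p = c}) (mset_set (snd ` \<Xi>))))"

definition col_counts :: "('a \<times> 'a) set \<Rightarrow> nat list" where
  "col_counts \<Xi> = rev (sorted_list_of_multiset
      (image_mset (\<lambda>c. card {p \<in> \<Xi>. fst p = c}) (mset_set (fst ` \<Xi>))))"

definition S_x :: "('a \<times> 'a) set \<Rightarrow> (nat \<times> nat) set" where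
  "S_x \<Xi> = {(i, j). j < length (row_counts \<Xi>) \<and> i < row_counts \<Xi> ! j}"

definition S_y :: "('a \<times> 'a) set \<Rightarrow> (nat \<times> nat) set" where
  "S_y \<Xi> = {(i, j). i < length (col_counts \<Xi>) \<and> j < col_counts \<Xi> ! i}"

definition maximal_row_subset :: "('a \<times> 'a) set \<Rightarrow> ('a \<times> 'a) set \<Rightarrow> bool" where
  "maximal_row_subset \<Xi> A \<longleftrightarrow> A \<noteq> {} \<and> (\<exists>c. A = {p \<in> \<Xi>. snd p = c})"

text \<open>States of the procedure: (current output \<Xi>', working set \<Xi>).\<close>
definition mcs_final :: "('a \<times> 'a) set \<times> ('a \<times> 'a) set \<Rightarrow> bool" where
  "mcs_final s \<longleftrightarrow> snd s = {} \<or> S_x (snd s) = S_y (snd s)"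

definition mcs_output :: "('a \<times> 'a) set \<times> ('a \<times> 'a) set \<Rightarrow> ('a \<times> 'a) set" where
  "mcs_output s = (if snd s = {} then fst s else fst s \<union> snd s)"

text \<open>Step (3), with any admissible choice of A.\<close>
definition mcs_step :: "('a \<times> 'a) set \<times> ('a \<times> 'a) set \<Rightarrow> ('a \<times> 'a) set \<times> ('a \<times> 'a) set \<Rightarrow> bool" where
  "mcs_step s t \<longleftrightarrow> \<not> mcs_final s \<and>
     (\<exists>A. maximal_row_subset (snd s) A \<and>
          (\<forall>B. maximal_row_subset (snd s) B \<longrightarrow> card B \<le> card A) \<and>
          t = (fst s \<union> A, {p \<in> snd s. p \<notin> A \<and> fst p \<in> fst ` A}))"

definition maximal_cartesian_subset :: "('a \<times> 'a) set \<Rightarrow> ('a \<times> 'a) set \<Rightarrow> bool" where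
  "maximal_cartesian_subset \<Xi> R \<longleftrightarrow> R \<subseteq> \<Xi> \<and> cartesian R \<and>
     \<not> (\<exists>R'. R' \<subseteq> \<Xi> \<and> cartesian R' \<and> R \<subset> R')"

end

theory Submission
  imports Defs
begin

(*
  The whole argument is about the rows of a point set, i.e. the sets of abscissae
  sharing one ordinate.  We first characterise cartesian sets combinatorially:
  a finite set is cartesian iff its rows are nested (totally ordered by inclusion),
  and the shape condition S_x(W) = S_y(W) forces nested rows (a double count of the
  points in the left strip i < k of the two staircases).

  The procedure is then analysed through an invariant of its states (P, W): the
  output P has nested rows, every row of the working set W lies inside every row of
  P, rows of P and W have different ordinates, and every subset of the input with
  nested rows that extends P stays inside P \<union> W.  A step (removing a longest row
  of W and all points outside its columns) preserves the invariant and strictly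
  shrinks W, which gives termination; a final state yields the maximal cartesian
  subset P \<union> W.
*)

definition row :: "('a \<times> 'b) set \<Rightarrow> 'b \<Rightarrow> 'a set" where
  "row S c = {x. (x, c) \<in> S}"

definition col :: "('a \<times> 'b) set \<Rightarrow> 'a \<Rightarrow> 'b set" where
  "col S a = {y. (a, y) \<in> S}"

definition nested_rows :: "('a \<times> 'b) set \<Rightarrow> bool" where
  "nested_rows S \<longleftrightarrow> (\<forall>c d. row S c \<subseteq> row S d \<or> row S d \<subseteq> row S c)"

lemma row_Un: "row (P \<union> Q) c = row P c \<union> row Q c"
  unfolding row_def by auto

lemma row_empty_iff: "row S c = {} \<longleftrightarrow> c \<notin> snd ` S"
  unfolding row_def by force

lemma row_eq_image: "row S c = fst ` {p \<in> S. snd p = c}"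
  unfolding row_def by force

lemma finite_row: "finite S \<Longrightarrow> finite (row S c)"
  unfolding row_eq_image by simp

lemma card_row_points: "card {p \<in> S. snd p = c} = card (row S c)"
proof -
  have "{p \<in> S. snd p = c} = (\<lambda>x. (x, c)) ` row S c" unfolding row_def by force
  then show ?thesis by (simp add: card_image inj_on_def)
qed

lemma col_eq_image: "col S a = snd ` {p \<in> S. fst p = a}"
  unfolding col_def by force

lemma finite_col: "finite S \<Longrightarrow> finite (col S a)"
  unfolding col_eq_image by simp

lemma card_col_points: "card {p \<in> S. fst p = a} = card (col S a)"
proof -
  have "{p \<in> S. fst p = a} = (\<lambda>y. (a, y)) ` col S a" unfolding col_def by force
  then show ?thesis by (simp add: card_image inj_on_def)
qed

text \<open>Nested rows are equivalent to nested columns: both say that S contains no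
  two points (a, c), (b, d) with (a, d), (b, c) missing.\<close>
lemma nested_rows_cols:
  "nested_rows S \<Longrightarrow> col S a \<subseteq> col S b \<or> col S b \<subseteq> col S a"
  unfolding nested_rows_def row_def col_def by blast

lemma chain_card_le_subset:
  assumes "finite T" "S \<subseteq> T \<or> T \<subseteq> S" "card T \<le> card S"
  shows "T \<subseteq> S"
  using assms by (metis card_seteq)

lemma nested_row_subset:
  assumes "finite S" "nested_rows S" "card (row S d) \<le> card (row S c)"
  shows "row S d \<subseteq> row S c"
proof -
  have "row S c \<subseteq> row S d \<or> row S d \<subseteq> row S c" using assms(2) unfolding nested_rows_def by blast
  then show ?thesis by (rule chain_card_le_subset[OF finite_row[OF assms(1)] _ assms(3)])
qed

lemma nested_col_subset:
  assumes "finite S" "nested_rows S" "card (col S b) \<le> card (col S a)"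
  shows "col S b \<subseteq> col S a"
  using nested_rows_cols[OF assms(2)] by (rule chain_card_le_subset[OF finite_col[OF assms(1)] _ assms(3)])

lemma nested_rows_single_row:
  assumes "snd ` S \<subseteq> {c}" shows "nested_rows S"
proof -
  have empty: "row S d = {}" if "d \<noteq> c" for d using assms that unfolding row_def by force
  show ?thesis unfolding nested_rows_def
  proof (intro allI)
    fix d e show "row S d \<subseteq> row S e \<or> row S e \<subseteq> row S d"
      using empty by (cases "d = c"; cases "e = c") auto
  qed
qed

lemma nested_rows_Un:
  assumes disj: "snd ` P \<inter> snd ` Q = {}"
    and P: "nested_rows P" and Q: "nested_rows Q"
    and below: "\<forall>c \<in> snd ` P. \<forall>d. row Q d \<subseteq> row P c"
  shows "nested_rows (P \<union> Q)"
  unfolding nested_rows_def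
proof (intro allI)
  fix e f
  have rows: "row (P \<union> Q) e = (if e \<in> snd ` P then row P e else row Q e)" for e
  proof (cases "e \<in> snd ` P")
    case True
    then have "e \<notin> snd ` Q" using disj by blast
    then have "row Q e = {}" by (simp add: row_empty_iff)
    then show ?thesis using True by (simp add: row_Un)
  next
    case False
    then have "row P e = {}" by (simp add: row_empty_iff)
    then show ?thesis using False by (simp add: row_Un)
  qed
  show "row (P \<union> Q) e \<subseteq> row (P \<union> Q) f \<or> row (P \<union> Q) f \<subseteq> row (P \<union> Q) e"
  proof (cases "e \<in> snd ` P"; cases "f \<in> snd ` P")
    assume "e \<in> snd ` P" "f \<in> snd ` P"
    then show ?thesis using P unfolding rows nested_rows_def by simp
  next
    assume "e \<in> snd ` P" "f \<notin> snd ` P"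
    then have "row Q f \<subseteq> row P e" using below by blast
    then show ?thesis using \<open>e \<in> snd ` P\<close> \<open>f \<notin> snd ` P\<close> unfolding rows by simp
  next
    assume "e \<notin> snd ` P" "f \<in> snd ` P"
    then have "row Q e \<subseteq> row P f" using below by blast
    then show ?thesis using \<open>e \<notin> snd ` P\<close> \<open>f \<in> snd ` P\<close> unfolding rows by simp
  next
    assume "e \<notin> snd ` P" "f \<notin> snd ` P"
    then show ?thesis using Q unfolding rows nested_rows_def by simp
  qed
qed

section \<open>Cartesian sets are exactly the finite sets with nested rows\<close>

text \<open>In a lower set, of two index pairs the one with smaller first index may be moved
  to the other's second index; so two rows of a cartesian set are always comparable.\<close>
lemma cartesian_nested_rows:
  assumes "cartesian S" shows "nested_rows S"
  unfolding nested_rows_def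
proof (rule ccontr)
  obtain A and x :: "nat \<Rightarrow> 'a" and y :: "nat \<Rightarrow> 'a" where L: "lower_set A"
    and S: "S = (\<lambda>(i, j). (x i, y j)) ` A" using assms unfolding cartesian_def by blast
  assume "\<not> (\<forall>c d. row S c \<subseteq> row S d \<or> row S d \<subseteq> row S c)"
  then obtain a b c d where a: "(a, c) \<in> S" "(a, d) \<notin> S" and b: "(b, d) \<in> S" "(b, c) \<notin> S"
    unfolding row_def by blast
  from a(1) S obtain i j where ij: "(i, j) \<in> A" "a = x i" "c = y j" by auto
  from b(1) S obtain i' j' where ij': "(i', j') \<in> A" "b = x i'" "d = y j'" by auto
  show False
  proof (cases "i \<le> i'")
    case True
    with L ij' have "(i, j') \<in> A" unfolding lower_set_def by blast
    then have "(a, d) \<in> S" using S ij ij' by force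
    with a show False by simp
  next
    case False
    with L ij have "(i', j) \<in> A" unfolding lower_set_def by (meson nat_le_linear order_refl)
    then have "(b, c) \<in> S" using S ij ij' by force
    with b show False by simp
  qed
qed

lemma decreasing_enumeration:
  fixes f :: "'b \<Rightarrow> nat"
  assumes "finite X"
  obtains zs where "distinct zs" "set zs = X"
    "rev (sorted_list_of_multiset (image_mset f (mset_set X))) = map f zs"
    "\<And>i j. i \<le> j \<Longrightarrow> j < length zs \<Longrightarrow> f (zs ! j) \<le> f (zs ! i)"
proof -
  obtain xs where xs: "distinct xs" "set xs = X" using assms finite_distinct_list by blast
  have sort: "sort (map f xs) = map f (sort_key f xs)"
    by (rule properties_for_sort) simp_all
  define zs where "zs = rev (sort_key f xs)"
  have "image_mset f (mset_set X) = mset (map f xs)" using xs mset_set_set[OF xs(1)] by simp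
  then have eq: "rev (sorted_list_of_multiset (image_mset f (mset_set X))) = map f zs"
    unfolding zs_def by (simp only: sorted_list_of_multiset_mset sort rev_map)
  have "sorted (rev (map f zs))" unfolding zs_def by (simp add: rev_map)
  then have "f (zs ! j) \<le> f (zs ! i)" if "i \<le> j" "j < length zs" for i j
    using sorted_rev_nth_mono[of "map f zs" i j] that by simp
  with that[of zs] eq xs show ?thesis unfolding zs_def by simp
qed

text \<open>A finite set with nested rows is cartesian: enumerate the columns and the rows by
  decreasing size; the index pairs of the points of S then form a lower set.\<close>
lemma nested_rows_cartesian:
  assumes fin: "finite S" and nested: "nested_rows S"
  shows "cartesian S"
proof -
  obtain xs where xs: "distinct xs" "set xs = fst ` S"
    and xs_dec: "\<And>i j. i \<le> j \<Longrightarrow> j < length xs \<Longrightarrow> card (col S (xs ! j)) \<le> card (col S (xs ! i))"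
    by (rule decreasing_enumeration[of "fst ` S" "\<lambda>a. card (col S a)"]) (use fin in simp_all)
  obtain ys where ys: "distinct ys" "set ys = snd ` S"
    and ys_dec: "\<And>i j. i \<le> j \<Longrightarrow> j < length ys \<Longrightarrow> card (row S (ys ! j)) \<le> card (row S (ys ! i))"
    by (rule decreasing_enumeration[of "snd ` S" "\<lambda>c. card (row S c)"]) (use fin in simp_all)
  define A where "A = {(i, j). i < length xs \<and> j < length ys \<and> (xs ! i, ys ! j) \<in> S}"
  have "lower_set A"
    unfolding lower_set_def
  proof (intro conjI allI impI)
    show "finite A"
      by (rule finite_subset[of _ "{..<length xs} \<times> {..<length ys}"]) (auto simp: A_def)
  next
    fix i j i' j' assume "(i, j) \<in> A \<and> i' \<le> i \<and> j' \<le> j"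
    then have ij: "i < length xs" "j < length ys" "(xs ! i, ys ! j) \<in> S" and "i' \<le> i" "j' \<le> j"
      by (auto simp: A_def)
    have "row S (ys ! j) \<subseteq> row S (ys ! j')"
      using nested_row_subset[OF fin nested] ys_dec \<open>j' \<le> j\<close> ij by blast
    then have "(xs ! i, ys ! j') \<in> S" using ij unfolding row_def by blast
    moreover have "col S (xs ! i) \<subseteq> col S (xs ! i')"
      using nested_col_subset[OF fin nested] xs_dec \<open>i' \<le> i\<close> ij by blast
    ultimately have "(xs ! i', ys ! j') \<in> S" unfolding col_def by blast
    then show "(i', j') \<in> A" using ij \<open>i' \<le> i\<close> \<open>j' \<le> j\<close> by (simp add: A_def)
  qed
  moreover have "inj_on ((!) xs) (fst ` A)"
    by (rule inj_on_nth[OF xs(1)]) (auto simp: A_def)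
  moreover have "inj_on ((!) ys) (snd ` A)"
    by (rule inj_on_nth[OF ys(1)]) (auto simp: A_def)
  moreover have "S = (\<lambda>(i, j). (xs ! i, ys ! j)) ` A"
  proof
    show "S \<subseteq> (\<lambda>(i, j). (xs ! i, ys ! j)) ` A"
    proof
      fix p assume p: "p \<in> S"
      obtain a b where ab: "p = (a, b)" by fastforce
      have "a \<in> set xs" "b \<in> set ys" using p ab xs ys by force+
      then obtain i j where "i < length xs" "xs ! i = a" "j < length ys" "ys ! j = b"
        by (metis in_set_conv_nth)
      then show "p \<in> (\<lambda>(i, j). (xs ! i, ys ! j)) ` A"
        using p ab by (auto simp: A_def image_iff intro!: bexI[of _ "(i, j)"])
    qed
    show "(\<lambda>(i, j). (xs ! i, ys ! j)) ` A \<subseteq> S" by (auto simp: A_def)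
  qed
  ultimately show ?thesis unfolding cartesian_def by blast
qed

section \<open>The shape condition S_x = S_y forces nested rows\<close>

lemma card_staircase_rows:
  fixes f :: "nat \<Rightarrow> nat" shows "card {(i, j). j < n \<and> i < f j} = (\<Sum>j<n. f j)"
proof -
  have "{(i, j). j < n \<and> i < f j} = prod.swap ` (SIGMA j:{..<n}. {..<f j})" by auto
  then show ?thesis by (simp add: card_image)
qed

lemma card_staircase_cols:
  fixes f :: "nat \<Rightarrow> nat" shows "card {(i, j). i < n \<and> j < f i} = (\<Sum>i<n. f i)"
proof -
  have "{(i, j). i < n \<and> j < f i} = (SIGMA i:{..<n}. {..<f i})" by auto
  then show ?thesis by simp
qed

lemma sum_take_distinct:
  assumes "distinct zs" "k \<le> length zs"
  shows "(\<Sum>i<k. g (zs ! i)) = (\<Sum>a\<in>set (take k zs). g a)"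
proof -
  have "set (take k zs) = (!) zs ` {..<k}" using nth_image[OF assms(2)] by (simp add: lessThan_atLeast0)
  moreover have "inj_on ((!) zs) {..<k}" using assms by (intro inj_on_nth) auto
  ultimately show ?thesis by (simp add: sum.reindex)
qed

lemma card_Sx_strip:
  assumes "finite W"
  shows "card (S_x W \<inter> {(i, j). i < k}) = (\<Sum>c\<in>snd ` W. min (card (row W c)) k)"
proof -
  obtain ws where ws: "distinct ws" "set ws = snd ` W" "row_counts W = map (\<lambda>c. card (row W c)) ws"
    by (rule decreasing_enumeration[of "snd ` W" "\<lambda>c. card {p \<in> W. snd p = c}"])
      (use assms in \<open>simp_all add: row_counts_def card_row_points\<close>)
  have "S_x W \<inter> {(i, j). i < k} = {(i, j). j < length ws \<and> i < min (card (row W (ws ! j))) k}"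
    unfolding S_x_def ws(3) by auto
  then have "card (S_x W \<inter> {(i, j). i < k}) = (\<Sum>j<length ws. min (card (row W (ws ! j))) k)"
    by (simp only: card_staircase_rows)
  also have "\<dots> = (\<Sum>c\<in>snd ` W. min (card (row W c)) k)"
    using sum_take_distinct[OF ws(1) order_refl] ws(2) by simp
  finally show ?thesis .
qed

text \<open>The strip i < k of S_y(W) consists of the k longest columns of W.\<close>
lemma card_Sy_strip:
  assumes "finite W" "k \<le> card (fst ` W)"
  obtains T where "T \<subseteq> fst ` W" "card T = k"
    "card (S_y W \<inter> {(i, j). i < k}) = (\<Sum>a\<in>T. card (col W a))"
proof -
  obtain zs where zs: "distinct zs" "set zs = fst ` W" "col_counts W = map (\<lambda>a. card (col W a)) zs"
    by (rule decreasing_enumeration[of "fst ` W" "\<lambda>a. card {p \<in> W. fst p = a}"])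
      (use assms(1) in \<open>simp_all add: col_counts_def card_col_points\<close>)
  have k: "k \<le> length zs" using assms(2) zs distinct_card by metis
  have "S_y W \<inter> {(i, j). i < k} = {(i, j). i < k \<and> j < card (col W (zs ! i))}"
    unfolding S_y_def zs(3) using k by auto
  then have "card (S_y W \<inter> {(i, j). i < k}) = (\<Sum>i<k. card (col W (zs ! i)))"
    by (simp only: card_staircase_cols)
  also have "\<dots> = (\<Sum>a\<in>set (take k zs). card (col W a))"
    by (rule sum_take_distinct[OF zs(1) k])
  finally have "card (S_y W \<inter> {(i, j). i < k}) = (\<Sum>a\<in>set (take k zs). card (col W a))" .
  moreover have "card (set (take k zs)) = k" using zs(1) k by (simp add: distinct_card)
  moreover have "set (take k zs) \<subseteq> fst ` W" using zs(2) set_take_subset by metis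
  ultimately show ?thesis using that by blast
qed

lemma count_by_columns_and_rows:
  assumes S: "finite S" and T: "finite T"
  shows "(\<Sum>a\<in>T. card (col S a)) = (\<Sum>c\<in>snd ` S. card (row S c \<inter> T))"
proof -
  have "card (\<Union>a\<in>T. {p \<in> S. fst p = a}) = (\<Sum>a\<in>T. card {p \<in> S. fst p = a})"
    by (rule card_UN_disjoint) (use S T in auto)
  then have "(\<Sum>a\<in>T. card (col S a)) = card (\<Union>a\<in>T. {p \<in> S. fst p = a})"
    by (simp add: card_col_points)
  also have "(\<Union>a\<in>T. {p \<in> S. fst p = a}) = (\<Union>c\<in>snd ` S. {p \<in> {q \<in> S. fst q \<in> T}. snd p = c})"
    by auto
  also have "card \<dots> = (\<Sum>c\<in>snd ` S. card {p \<in> {q \<in> S. fst q \<in> T}. snd p = c})"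
    by (rule card_UN_disjoint) (use S in auto)
  also have "\<dots> = (\<Sum>c\<in>snd ` S. card (row {q \<in> S. fst q \<in> T} c))"
    by (simp only: card_row_points)
  also have "\<dots> = (\<Sum>c\<in>snd ` S. card (row S c \<inter> T))"
    by (simp add: row_def Int_def conj_commute)
  finally show ?thesis .
qed

text \<open>With k = |row d|, both strips i < k have equally many cells, which
  forces every row to meet the k longest columns T in min(|row|, k) points.\<close>
lemma equal_shapes_row_subset:
  assumes fin: "finite W" and shape: "S_x W = S_y W"
    and d: "d \<in> snd ` W" and le: "card (row W d) \<le> card (row W e)"
  shows "row W d \<subseteq> row W e"
proof -
  define k where "k = card (row W d)"
  have "row W d \<noteq> {}" using d by (simp add: row_empty_iff)
  then have k_pos: "k > 0" unfolding k_def using finite_row[OF fin] by auto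
  have "row W d \<subseteq> fst ` W" unfolding row_def by force
  then have "k \<le> card (fst ` W)" unfolding k_def using fin card_mono by blast
  then obtain T where T: "T \<subseteq> fst ` W" "card T = k"
    and Sy: "card (S_y W \<inter> {(i, j). i < k}) = (\<Sum>a\<in>T. card (col W a))"
    by (rule card_Sy_strip[OF fin])
  have finT: "finite T" using T fin finite_subset by blast
  have sums: "(\<Sum>c\<in>snd ` W. card (row W c \<inter> T)) = (\<Sum>c\<in>snd ` W. min (card (row W c)) k)"
    using card_Sx_strip[OF fin, of k] Sy count_by_columns_and_rows[OF fin finT] shape by simp
  have bound: "card (row W c \<inter> T) \<le> min (card (row W c)) k" for c
    using card_mono[OF finite_row[OF fin] Int_lower1] card_mono[OF finT Int_lower2] T(2) by simp
  have exact: "card (row W c \<inter> T) = min (card (row W c)) k" if "c \<in> snd ` W" for c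
    using sum_mono_inv[OF sums bound that] fin by simp
  have "e \<in> snd ` W"
  proof (rule ccontr)
    assume "e \<notin> snd ` W"
    then have "row W e = {}" by (simp add: row_empty_iff)
    then show False using le k_pos unfolding k_def by simp
  qed
  have "card (row W d \<inter> T) = card (row W d)" using exact[OF d] unfolding k_def by simp
  then have "row W d \<subseteq> T" using finite_row[OF fin] by (metis card_subset_eq inf_le1 inf.absorb_iff1)
  moreover have "card (row W e \<inter> T) = card T" using exact[OF \<open>e \<in> snd ` W\<close>] le T(2) k_def by simp
  then have "T \<subseteq> row W e" using finT by (metis card_subset_eq inf_le2 inf.absorb_iff2)
  ultimately show ?thesis by blast
qed

lemma equal_shapes_nested_rows:
  assumes "finite W" "S_x W = S_y W"
  shows "nested_rows W"
  unfolding nested_rows_def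
proof (intro allI)
  fix c d
  show "row W c \<subseteq> row W d \<or> row W d \<subseteq> row W c"
  proof (cases "c \<in> snd ` W \<and> d \<in> snd ` W")
    case True
    then show ?thesis
      using equal_shapes_row_subset[OF assms, of c d] equal_shapes_row_subset[OF assms, of d c]
      by (cases "card (row W c) \<le> card (row W d)") auto
  next
    case False
    then have "row W c = {} \<or> row W d = {}" by (simp add: row_empty_iff)
    then show ?thesis by blast
  qed
qed

lemma maximal_row_subset_iff:
  "maximal_row_subset W A \<longleftrightarrow> (\<exists>c \<in> snd ` W. A = {p \<in> W. snd p = c})"
  unfolding maximal_row_subset_def by force

lemma longest_row_iff:
  "(\<forall>B. maximal_row_subset W B \<longrightarrow> card B \<le> card {p \<in> W. snd p = c})
    \<longleftrightarrow> (\<forall>d. card (row W d) \<le> card (row W c))"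
proof
  assume longest: "\<forall>B. maximal_row_subset W B \<longrightarrow> card B \<le> card {p \<in> W. snd p = c}"
  show "\<forall>d. card (row W d) \<le> card (row W c)"
  proof
    fix d show "card (row W d) \<le> card (row W c)"
    proof (cases "d \<in> snd ` W")
      case True
      then have "maximal_row_subset W {p \<in> W. snd p = d}" unfolding maximal_row_subset_iff by blast
      then have "card {p \<in> W. snd p = d} \<le> card {p \<in> W. snd p = c}" using longest by blast
      then show ?thesis by (simp only: card_row_points)
    next
      case False
      then show ?thesis by (simp add: row_empty_iff[THEN iffD2])
    qed
  qed
next
  assume longest: "\<forall>d. card (row W d) \<le> card (row W c)"
  show "\<forall>B. maximal_row_subset W B \<longrightarrow> card B \<le> card {p \<in> W. snd p = c}"
  proof (intro allI impI)
    fix B assume "maximal_row_subset W B"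
    then obtain d where "B = {p \<in> W. snd p = d}" unfolding maximal_row_subset_def by blast
    then show "card B \<le> card {p \<in> W. snd p = c}" using longest by (simp only: card_row_points)
  qed
qed

lemma remaining_points:
  "{p \<in> W. p \<notin> {q \<in> W. snd q = c} \<and> fst p \<in> fst ` {q \<in> W. snd q = c}}
    = {p \<in> W. snd p \<noteq> c \<and> fst p \<in> row W c}"
  unfolding row_eq_image by blast

lemma mcs_step_iff:
  "mcs_step (P, W) t \<longleftrightarrow> \<not> mcs_final (P, W) \<and>
     (\<exists>c \<in> snd ` W. (\<forall>d. card (row W d) \<le> card (row W c)) \<and>
        t = (P \<union> {p \<in> W. snd p = c}, {p \<in> W. snd p \<noteq> c \<and> fst p \<in> row W c}))"
proof -
  have choose_row: "(\<exists>A. maximal_row_subset W A \<and> Q A) \<longleftrightarrow> (\<exists>c \<in> snd ` W. Q {p \<in> W. snd p = c})"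
    for Q unfolding maximal_row_subset_iff by blast
  show ?thesis unfolding mcs_step_def fst_conv snd_conv
    by (simp only: choose_row longest_row_iff remaining_points)
qed

lemma mcs_step_shrinks:
  assumes "mcs_step s t" shows "snd t \<subset> snd s"
proof -
  from assms obtain A where "maximal_row_subset (snd s) A"
    and t: "t = (fst s \<union> A, {p \<in> snd s. p \<notin> A \<and> fst p \<in> fst ` A})"
    unfolding mcs_step_def by blast
  then have "A \<noteq> {}" "A \<subseteq> snd s" unfolding maximal_row_subset_def by auto
  then show ?thesis using t by auto
qed

lemma mcs_no_infinite_run:
  assumes fin: "finite (snd s)"
  shows "\<not> (\<exists>f. f 0 = s \<and> (\<forall>n. mcs_step (f n) (f (Suc n))))"
proof
  assume "\<exists>f. f 0 = s \<and> (\<forall>n. mcs_step (f n) (f (Suc n)))"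
  then obtain f where f0: "f 0 = s" and run: "\<And>n. mcs_step (f n) (f (Suc n))" by blast
  have sub: "snd (f n) \<subseteq> snd s" for n
    using mcs_step_shrinks[OF run] f0 by (induction n) fastforce+
  have "(f (Suc n), f n) \<in> inv_image finite_psubset snd" for n
    using mcs_step_shrinks[OF run, of n] sub[of n] fin finite_subset by (auto simp: finite_psubset_def)
  moreover obtain k where "(f (Suc k), f k) \<notin> inv_image finite_psubset snd"
    using wf_no_infinite_down_chainE[OF wf_inv_image[OF wf_finite_psubset]] by blast
  ultimately show False by blast
qed

lemma mcs_progress:
  assumes fin: "finite (snd s)"
  shows "mcs_final s \<or> (\<exists>t. mcs_step s t)"
proof (cases "mcs_final s")
  case True
  then show ?thesis ..
next
  case nonfinal: False
  obtain P W where s: "s = (P, W)" by fastforce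
  define len where "len c = card (row W c)" for c
  have "W \<noteq> {}" using nonfinal s unfolding mcs_final_def by simp
  then have ne: "len ` snd ` W \<noteq> {}" and fin_len: "finite (len ` snd ` W)" using fin s by auto
  have "Max (len ` snd ` W) \<in> len ` snd ` W" by (rule Max_in[OF fin_len ne])
  then obtain c where c: "c \<in> snd ` W" "len c = Max (len ` snd ` W)" by (metis imageE)
  have "card (row W d) \<le> card (row W c)" for d
  proof (cases "d \<in> snd ` W")
    case True
    then show ?thesis using c(2) Max_ge[OF fin_len] unfolding len_def by simp
  next
    case False
    then show ?thesis by (simp add: row_empty_iff[THEN iffD2])
  qed
  then have "\<exists>t. mcs_step s t" using nonfinal c(1) unfolding s mcs_step_iff by blast
  then show ?thesis ..
qed

section \<open>The invariant of the procedure\<close>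

definition mcs_invariant :: "('a \<times> 'b) set \<Rightarrow> ('a \<times> 'b) set \<Rightarrow> ('a \<times> 'b) set \<Rightarrow> bool" where
  "mcs_invariant X P W \<longleftrightarrow> P \<union> W \<subseteq> X \<and> snd ` P \<inter> snd ` W = {} \<and> nested_rows P \<and>
     (\<forall>c \<in> snd ` P. \<forall>d. row W d \<subseteq> row P c) \<and>
     (\<forall>R. R \<subseteq> X \<and> nested_rows R \<and> P \<subseteq> R \<longrightarrow> R \<subseteq> P \<union> W)"

lemma mcs_invariant_init: "mcs_invariant X {} X"
proof -
  have "nested_rows {}" by (rule nested_rows_single_row[of _ undefined]) simp
  then show ?thesis unfolding mcs_invariant_def by simp
qed

text \<open>Maximality survives a step: a set R with nested rows containing P and a longest
  row c of W can only use points of other rows lying in the columns of row c, since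
  otherwise the row of such a point would strictly contain row c.\<close>
lemma longest_row_extension:
  assumes fin: "finite W" and disj: "snd ` P \<inter> snd ` W = {}"
    and c: "c \<in> snd ` W" and longest: "\<forall>d. card (row W d) \<le> card (row W c)"
    and R: "nested_rows R" "R \<subseteq> P \<union> W" "P \<union> {p \<in> W. snd p = c} \<subseteq> R"
  shows "R \<subseteq> P \<union> {p \<in> W. snd p = c} \<union> {p \<in> W. snd p \<noteq> c \<and> fst p \<in> row W c}"
proof
  fix q assume "q \<in> R"
  obtain a e where q: "q = (a, e)" by fastforce
  show "q \<in> P \<union> {p \<in> W. snd p = c} \<union> {p \<in> W. snd p \<noteq> c \<and> fst p \<in> row W c}"
  proof (cases "q \<in> P \<union> {p \<in> W. snd p = c}")
    case False
    then have "(a, e) \<in> W" "e \<noteq> c" using \<open>q \<in> R\<close> R(2) q by auto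
    then have "e \<notin> snd ` P" using disj by force
    then have "row P e = {}" by (simp add: row_empty_iff)
    then have Re: "row R e \<subseteq> row W e" using R(2) by (auto simp: row_def)
    have "row P c = {}" using c disj by (auto simp: row_empty_iff)
    then have Rc: "row R c = row W c" using R(2,3) by (auto simp: row_def)
    have "a \<in> row R e" using \<open>q \<in> R\<close> q by (simp add: row_def)
    have "a \<in> row W c"
    proof (rule ccontr)
      assume "a \<notin> row W c"
      then have "row R c \<subseteq> row R e" using R(1) Rc \<open>a \<in> row R e\<close> unfolding nested_rows_def by blast
      then have "row W c \<subset> row W e" using Rc Re \<open>a \<in> row R e\<close> \<open>a \<notin> row W c\<close> by blast
      then have "card (row W c) < card (row W e)" using finite_row[OF fin] by (rule psubset_card_mono[rotated])
      then show False using longest by (simp add: not_le[symmetric])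
    qed
    then show ?thesis using \<open>(a, e) \<in> W\<close> \<open>e \<noteq> c\<close> q by simp
  qed simp
qed

lemma mcs_invariant_step:
  assumes fin: "finite X" and inv: "mcs_invariant X P W" and step: "mcs_step (P, W) (P', W')"
  shows "mcs_invariant X P' W'"
proof -
  from step obtain c where c: "c \<in> snd ` W" and longest: "\<forall>d. card (row W d) \<le> card (row W c)"
    and P': "P' = P \<union> {p \<in> W. snd p = c}" and W': "W' = {p \<in> W. snd p \<noteq> c \<and> fst p \<in> row W c}"
    unfolding mcs_step_iff by blast
  define A where "A = {p \<in> W. snd p = c}"
  have sub: "P \<union> W \<subseteq> X" and disj: "snd ` P \<inter> snd ` W = {}" and nested: "nested_rows P"
    and below: "\<forall>c \<in> snd ` P. \<forall>d. row W d \<subseteq> row P c"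
    and maximal: "\<forall>R. R \<subseteq> X \<and> nested_rows R \<and> P \<subseteq> R \<longrightarrow> R \<subseteq> P \<union> W"
    using inv unfolding mcs_invariant_def by blast+
  have finW: "finite W" using sub fin finite_subset by blast
  have sndA: "snd ` A \<subseteq> {c}" unfolding A_def by auto
  have "c \<notin> snd ` P" using c disj by blast
  have rowA: "row A d \<subseteq> row W d" for d unfolding A_def row_def by auto
  have rowAc: "row A c = row W c" unfolding A_def row_def by auto
  have rowW': "row W' d \<subseteq> row W d \<inter> row W c" for d unfolding W' row_def by auto
  have "P' \<union> W' \<subseteq> X" using sub unfolding P' W' by blast
  moreover have "snd ` P' \<inter> snd ` W' = {}" using disj sndA unfolding P' W' A_def by force
  moreover have "nested_rows P'" unfolding P' A_def[symmetric]
  proof (rule nested_rows_Un[OF _ nested nested_rows_single_row[OF sndA]])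
    show "snd ` P \<inter> snd ` A = {}" using sndA \<open>c \<notin> snd ` P\<close> by blast
    show "\<forall>c \<in> snd ` P. \<forall>d. row A d \<subseteq> row P c" using below rowA by blast
  qed
  moreover have "\<forall>e \<in> snd ` P'. \<forall>d. row W' d \<subseteq> row P' e"
  proof (intro ballI allI)
    fix e d assume "e \<in> snd ` P'"
    then consider "e \<in> snd ` P" | "e = c" using sndA unfolding P' A_def[symmetric] by blast
    then show "row W' d \<subseteq> row P' e"
    proof cases
      case 1 then show ?thesis using rowW' below unfolding P' row_Un by blast
    next
      case 2 then show ?thesis using rowW' rowAc unfolding P' A_def[symmetric] row_Un by blast
    qed
  qed
  moreover have "R \<subseteq> P' \<union> W'" if "R \<subseteq> X" "nested_rows R" "P' \<subseteq> R" for R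
    using longest_row_extension[OF finW disj c longest] maximal that unfolding P' W' by blast
  ultimately show ?thesis unfolding mcs_invariant_def by blast
qed

lemma mcs_invariant_reachable:
  assumes fin: "finite X" and reach: "mcs_step\<^sup>*\<^sup>* ({}, X) s"
  shows "mcs_invariant X (fst s) (snd s)"
  using reach
proof (induction rule: rtranclp_induct)
  case base
  then show ?case using mcs_invariant_init by simp
next
  case (step s t)
  then show ?case using mcs_invariant_step[OF fin, of "fst s" "snd s" "fst t" "snd t"] by simp
qed

text \<open>A final state yields a maximal cartesian subset: the working set has nested rows
  (it is empty or satisfies the shape condition), hence so has P \<union> W, and every
  cartesian extension of P within X stays inside P \<union> W.\<close>
lemma mcs_final_output:
  assumes fin: "finite X" and inv: "mcs_invariant X (fst s) (snd s)" and final: "mcs_final s"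
  shows "maximal_cartesian_subset X (mcs_output s)"
proof -
  obtain P W where s: "s = (P, W)" by fastforce
  have sub: "P \<union> W \<subseteq> X" and disj: "snd ` P \<inter> snd ` W = {}" and nested: "nested_rows P"
    and below: "\<forall>c \<in> snd ` P. \<forall>d. row W d \<subseteq> row P c"
    and maximal: "\<forall>R. R \<subseteq> X \<and> nested_rows R \<and> P \<subseteq> R \<longrightarrow> R \<subseteq> P \<union> W"
    using inv unfolding s mcs_invariant_def by auto
  have finPW: "finite (P \<union> W)" using sub fin finite_subset by blast
  have "nested_rows W"
  proof (cases "W = {}")
    case True
    then show ?thesis using nested_rows_single_row[of W] by simp
  next
    case False
    then have "S_x W = S_y W" using final unfolding s mcs_final_def by simp
    then show ?thesis using equal_shapes_nested_rows finPW by blast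
  qed
  then have "cartesian (P \<union> W)"
    using nested_rows_cartesian[OF finPW nested_rows_Un[OF disj nested _ below]] by blast
  moreover have "\<not> (\<exists>R. R \<subseteq> X \<and> cartesian R \<and> P \<union> W \<subset> R)"
    using maximal cartesian_nested_rows by blast
  moreover have "mcs_output s = P \<union> W" unfolding s mcs_output_def by simp
  ultimately show ?thesis unfolding maximal_cartesian_subset_def using sub by simp
qed

theorem mainTheorem7:
  fixes \<Xi> :: "('a::field \<times> 'a) set"
  assumes "finite \<Xi>"
  shows "\<not> (\<exists>f. f 0 = ({}, \<Xi>) \<and> (\<forall>n. mcs_step (f n) (f (Suc n))))
    \<and> (\<forall>s. mcs_step\<^sup>*\<^sup>* ({}, \<Xi>) s \<longrightarrow> mcs_final s \<or> (\<exists>t. mcs_step s t))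
    \<and> (\<forall>s. mcs_step\<^sup>*\<^sup>* ({}, \<Xi>) s \<and> mcs_final s \<longrightarrow>
           maximal_cartesian_subset \<Xi> (mcs_output s))"
proof (intro conjI allI impI)
  show "\<not> (\<exists>f. f 0 = ({}, \<Xi>) \<and> (\<forall>n. mcs_step (f n) (f (Suc n))))"
    using mcs_no_infinite_run[of "({}, \<Xi>)"] assms by simp
next
  fix s assume "mcs_step\<^sup>*\<^sup>* ({}, \<Xi>) s"
  then have "snd s \<subseteq> \<Xi>" using mcs_invariant_reachable[OF assms] unfolding mcs_invariant_def by blast
  then show "mcs_final s \<or> (\<exists>t. mcs_step s t)" using mcs_progress assms finite_subset by blast
next
  fix s assume "mcs_step\<^sup>*\<^sup>* ({}, \<Xi>) s \<and> mcs_final s"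
  then show "maximal_cartesian_subset \<Xi> (mcs_output s)"
    using mcs_final_output[OF assms mcs_invariant_reachable[OF assms]] by blast
qed

end
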